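(* For every $f\in L^{\infty}(\mathbb{R}_+)$ and every $\omega\in\Omega^*$, $\chi_\omega(f)=\int_0^{\infty}f_\omega(-t)e^{-t}\,dt$.
   Context: $L^{\infty}(\mathbb{R}_+)$: real-valued essentially bounded measurable functions on $[0,\infty)$. Let $\beta\mathbb{N}_0$ be the Stone–Čech compactification of $\mathbb{N}_0$ (points = ultrafilters), $\tau$ the continuous extension of $n\mapsto n+1$, $\Omega=(\beta\mathbb{N}_0\times[0,1])/\sim$ with $(\tau\eta,0)\sim(\eta,1)$, containing $\mathbb{R}_+$ via $(n,t)\mapsto n+t$, and $\Omega^*=\Omega\setminus\mathbb{R}_+$; on $\Omega^*$ the flow $\tau^s(\eta,t)=(\tau^{[t+s]}\eta,t+s-[t+s])$, $s\in\mathbb{R}$. Each $\omega=(\eta,t)$ is identified with the ultrafilter $\{A+t:A\in\eta\}$ on $\mathbb{R}_+$. For $f\in L^{\infty}(\mathbb{R}_+)$ and $s\ge0$ put $f_s(x)=f(x+s)$; for $\omega\in\Omega^*$, $f_\omega=\omega\text{-}\lim_sf_s$, the limit along $\omega$ in the weak* topology of $L^{\infty}(\mathbb{R}_+)=L^1(\mathbb{R}_+)^*$, extended to $\mathbb{R}$ by $f_\omega(x)=f_{\tau^{-N}\omega}(N+x)$ for $x\in[-N,0]$, $N>0$. Finally $\chi_\omega(f)=\omega\text{-}\lim_xe^{-x}\int_0^xf(t)e^t\,dt$. *)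

theory Defs
  imports "HOL-Analysis.Analysis"
begin

text \<open>A point of beta N_0 is an ultrafilter on nat (represented as a filter).\<close>
definition is_ultrafilter :: "'a filter \<Rightarrow> bool" where
  "is_ultrafilter F \<longleftrightarrow> F \<noteq> bot \<and> (\<forall>P. eventually P F \<or> eventually (\<lambda>x. \<not> P x) F)"

text \<open>Free (non-principal) ultrafilters on N_0 are exactly those containing all cofinite
  sets, i.e. those finer than the cofinite filter sequentially.  A point
  omega = (eta, t) of Omega lies in Omega* = Omega minus R_+ iff eta is free; we use the
  canonical representative t in [0,1) of the identification (tau eta, 0) ~ (eta, 1).\<close>
definition Omega_star :: "(nat filter \<times> real) set" where
  "Omega_star = {(\<eta>, t). is_ultrafilter \<eta> \<and> \<eta> \<le> sequentially \<and> 0 \<le> t \<and> t < 1}"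

text \<open>The ultrafilter on R_+ identified with omega = (eta,t): the sets A + t, A in eta.\<close>
definition omega_filter :: "nat filter \<times> real \<Rightarrow> real filter" where
  "omega_filter \<omega> = filtermap (\<lambda>n. real n + snd \<omega>) (fst \<omega>)"

text \<open>The flow tau^(-N) for integer N on Omega*: (eta,t) goes to (tau^(-N) eta, t); on free
  ultrafilters tau^N = filtermap (%n. n+N) is invertible with inverse filtermap (%n. n-N).\<close>
definition tau_back :: "nat \<Rightarrow> nat filter \<times> real \<Rightarrow> nat filter \<times> real" where
  "tau_back N \<omega> = (filtermap (\<lambda>n. n - N) (fst \<omega>), snd \<omega>)"

definition Linf_Rplus :: "(real \<Rightarrow> real) set" where
  "Linf_Rplus = {f. set_borel_measurable lebesgue {0..} f \<and>
                    (\<exists>C. AE x in lebesgue. x \<in> {0..} \<longrightarrow> \<bar>f x\<bar> \<le> C)}"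

definition L1_Rplus :: "(real \<Rightarrow> real) set" where
  "L1_Rplus = {h. set_integrable lebesgue {0..} h}"

definition weak_star_lim :: "(real \<Rightarrow> real) \<Rightarrow> nat filter \<times> real \<Rightarrow> (real \<Rightarrow> real) \<Rightarrow> bool" where
  "weak_star_lim f \<omega> g \<longleftrightarrow> g \<in> Linf_Rplus \<and>
     (\<forall>h \<in> L1_Rplus.
        ((\<lambda>s. LINT x:{0..}|lebesgue. f (x + s) * h x) \<longlongrightarrow>
           (LINT x:{0..}|lebesgue. g x * h x)) (omega_filter \<omega>))"

definition f_omega :: "(real \<Rightarrow> real) \<Rightarrow> nat filter \<times> real \<Rightarrow> real \<Rightarrow> real" where
  "f_omega f \<omega> = (SOME g. weak_star_lim f \<omega> g)"

definition f_omega_ext :: "(real \<Rightarrow> real) \<Rightarrow> nat filter \<times> real \<Rightarrow> real \<Rightarrow> real" where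
  "f_omega_ext f \<omega> x =
     (if 0 \<le> x then f_omega f \<omega> x
      else (let N = nat \<lceil>- x\<rceil> in f_omega f (tau_back N \<omega>) (real N + x)))"

definition chi :: "nat filter \<times> real \<Rightarrow> (real \<Rightarrow> real) \<Rightarrow> real" where
  "chi \<omega> f = Lim (omega_filter \<omega>)
      (\<lambda>x. exp (- x) * (LINT t:{0..x}|lebesgue. f t * exp t))"

end

theory Submission
  imports Defs
begin

text \<open>
  Substituting \<open>u = x - t\<close> gives \<open>exp (-x) * \<integral>[0,x] f t * exp t = \<integral>[0,x] f (x - u) * exp (-u)\<close>.
  Cut \<open>[0,x]\<close> into the unit intervals \<open>(n, n+1]\<close>, \<open>n < M\<close>, and a tail beyond \<open>M\<close>, which is
  at most \<open>C * exp (-M)\<close> uniformly in \<open>x\<close>. On \<open>(n, n+1]\<close> the substitution \<open>u = n + 1 - y\<close>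
  turns the piece into \<open>\<integral>[0,1) f (y + s) * exp (y - n - 1)\<close> with \<open>s = x - n - 1\<close>. As \<open>x\<close>
  runs along \<open>\<omega>\<close>, the shift \<open>s\<close> runs along \<open>\<tau>\<^sup>-\<^sup>n\<^sup>-\<^sup>1 \<omega>\<close>, so by the definition of the
  weak-* limit the piece tends to the corresponding piece of \<open>\<integral>[0,\<infinity>) f\<^sub>\<omega> (-u) * exp (-u)\<close>.

  This needs the weak-* limits to exist and to keep the bound \<open>C\<close> of \<open>f\<close>. Bounded families
  converge along ultrafilters, so the limit of the pairings is a bounded functional on \<open>L\<^sup>1\<close> of
  the finite measure \<open>exp (-x) dx\<close> on \<open>[0,\<infinity>)\<close>, and such a functional is represented by a
  bounded function via the Radon-Nikodym theorem.
\<close>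

section \<open>Limits along ultrafilters\<close>

lemma is_ultrafilter_filtermap:
  assumes "is_ultrafilter F"
  shows "is_ultrafilter (filtermap g F)"
  using assms unfolding is_ultrafilter_def by (auto simp: eventually_filtermap filtermap_bot_iff)

lemma ultrafilter_bounded_tendsto_Lim:
  fixes \<phi> :: "'a \<Rightarrow> real"
  assumes U: "is_ultrafilter F" and B: "eventually (\<lambda>s. \<bar>\<phi> s\<bar> \<le> B) F"
  shows "(\<phi> \<longlongrightarrow> Lim F \<phi>) F"
proof -
  let ?G = "filtermap \<phi> F"
  have "?G \<noteq> bot"
    using U by (simp add: is_ultrafilter_def filtermap_bot_iff)
  moreover have "eventually (\<lambda>y. y \<in> {-B..B}) ?G"
    using B by (simp add: eventually_filtermap abs_le_iff) (auto elim: eventually_mono)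
  ultimately obtain L where L: "inf (nhds L) ?G \<noteq> bot"
    using compact_filter[THEN iffD1, rule_format, OF compact_Icc] by blast
  have "eventually (\<lambda>s. \<phi> s \<in> S) F" if "open S" "L \<in> S" for S
  proof (rule ccontr)
    assume "\<not> eventually (\<lambda>s. \<phi> s \<in> S) F"
    with U have "eventually (\<lambda>y. y \<notin> S) ?G"
      unfolding is_ultrafilter_def eventually_filtermap by blast
    moreover have "eventually (\<lambda>y. y \<in> S) (nhds L)"
      using that by (rule eventually_nhds_in_open)
    ultimately have "eventually (\<lambda>y. False) (inf (nhds L) ?G)"
      using eventually_inf by blast
    with L show False
      by (simp add: eventually_False)
  qed
  then have "(\<phi> \<longlongrightarrow> L) F"
    unfolding tendsto_def by blast
  moreover have "F \<noteq> bot"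
    using U by (simp add: is_ultrafilter_def)
  ultimately show ?thesis
    using tendsto_Lim by blast
qed

section \<open>Bounded functionals on \<open>L\<^sup>1\<close> of a finite measure\<close>

lemma AE_le_if_integral_indicator_le:
  fixes g :: "'a \<Rightarrow> real"
  assumes [measurable]: "g \<in> borel_measurable M" "S \<in> sets M"
    and le: "\<And>A. A \<in> sets M \<Longrightarrow> A \<subseteq> S \<Longrightarrow>
      integrable M (\<lambda>x. g x * indicator A x) \<and> (\<integral>x. g x * indicator A x \<partial>M) \<le> C * measure M A"
    and fin: "emeasure M S < \<infinity>"
  shows "AE x in M. x \<in> S \<longrightarrow> g x \<le> C"
proof -
  define A where "A = {x \<in> space M. x \<in> S \<and> C < g x}"
  have A: "A \<in> sets M" "A \<subseteq> S"
    unfolding A_def by measurable auto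
  have "emeasure M A < \<infinity>"
    using emeasure_mono[OF A(2) assms(2)] fin by (simp add: less_le_trans)
  then have int_C: "integrable M (\<lambda>x. C * indicator A x :: real)"
    using A by simp
  have eq: "(\<lambda>x. (g x - C) * indicator A x) = (\<lambda>x. g x * indicator A x - C * indicator A x)"
    by (auto simp: fun_eq_iff algebra_simps)
  have int: "integrable M (\<lambda>x. (g x - C) * indicator A x)"
    unfolding eq using le[OF A] int_C by simp
  have nonneg: "AE x in M. 0 \<le> (g x - C) * indicator A x"
    by (auto simp: A_def indicator_def)
  have "(\<integral>x. (g x - C) * indicator A x \<partial>M) \<le> 0"
    unfolding eq using le[OF A] int_C A by (simp add: Int_absorb2)
  then have "(\<integral>x. (g x - C) * indicator A x \<partial>M) = 0"
    using integral_nonneg_AE[OF nonneg] by linarith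
  then have "AE x in M. (g x - C) * indicator A x = 0"
    using integral_nonneg_eq_0_iff_AE[OF int nonneg] by simp
  then show ?thesis
    using AE_space by eventually_elim (auto simp: A_def indicator_def)
qed

lemma AE_abs_le_if_integral_indicator_le:
  fixes g :: "'a \<Rightarrow> real"
  assumes [measurable]: "g \<in> borel_measurable M" "S \<in> sets M"
    and le: "\<And>A. A \<in> sets M \<Longrightarrow> A \<subseteq> S \<Longrightarrow>
      integrable M (\<lambda>x. g x * indicator A x) \<and> \<bar>\<integral>x. g x * indicator A x \<partial>M\<bar> \<le> C * measure M A"
    and fin: "emeasure M S < \<infinity>"
  shows "AE x in M. x \<in> S \<longrightarrow> \<bar>g x\<bar> \<le> C"
proof -
  have "AE x in M. x \<in> S \<longrightarrow> g x \<le> C"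
    using le by (intro AE_le_if_integral_indicator_le[OF assms(1,2) _ fin]) (auto simp: abs_le_iff)
  moreover have "AE x in M. x \<in> S \<longrightarrow> - g x \<le> C"
    using le by (intro AE_le_if_integral_indicator_le[OF _ assms(2) _ fin]) (auto simp: abs_le_iff)
  ultimately show ?thesis
    by eventually_elim auto
qed

lemma integral_abs_diff_tendsto_0:
  fixes u :: "'a \<Rightarrow> real"
  assumes s: "\<And>i. integrable M (s i)" and u: "integrable M u"
    and lim: "\<And>x. x \<in> space M \<Longrightarrow> (\<lambda>i. s i x) \<longlonglongrightarrow> u x"
    and dom: "\<And>i x. x \<in> space M \<Longrightarrow> \<bar>s i x\<bar> \<le> 2 * \<bar>u x\<bar>"
  shows "(\<lambda>i. \<integral>x. \<bar>s i x - u x\<bar> \<partial>M) \<longlonglongrightarrow> 0"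
proof -
  have "(\<lambda>i. \<integral>x. \<bar>s i x - u x\<bar> \<partial>M) \<longlonglongrightarrow> (\<integral>x. 0 \<partial>M)"
  proof (rule integral_dominated_convergence[where w="\<lambda>x. 3 * \<bar>u x\<bar>"])
    show "(\<lambda>x. \<bar>s i x - u x\<bar>) \<in> borel_measurable M" for i
      using s u by measurable
    show "AE x in M. (\<lambda>i. \<bar>s i x - u x\<bar>) \<longlonglongrightarrow> 0"
      using lim by (intro AE_I2 tendsto_rabs_zero LIM_zero)
    show "AE x in M. norm \<bar>s i x - u x\<bar> \<le> 3 * \<bar>u x\<bar>" for i
      using dom[of _ i] by (intro AE_I2) fastforce
  qed (use u in simp_all)
  then show ?thesis
    by simp
qed

lemma integrable_bounded_mult:
  fixes \<phi> u :: "'a \<Rightarrow> real"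
  assumes "integrable M u" "\<phi> \<in> borel_measurable M" "AE x in M. \<bar>\<phi> x\<bar> \<le> C"
  shows "integrable M (\<lambda>x. \<phi> x * u x)"
proof (rule Bochner_Integration.integrable_bound)
  show "integrable M (\<lambda>x. C * u x)"
    using assms(1) by simp
  show "AE x in M. norm (\<phi> x * u x) \<le> norm (C * u x)"
    using assms(3) by eventually_elim (auto simp: abs_mult intro: mult_right_mono order.trans)
qed (use assms in measurable)

lemma abs_integral_bounded_mult_le:
  fixes \<phi> u :: "'a \<Rightarrow> real"
  assumes "integrable M u" "\<phi> \<in> borel_measurable M" "AE x in M. \<bar>\<phi> x\<bar> \<le> C"
  shows "\<bar>\<integral>x. \<phi> x * u x \<partial>M\<bar> \<le> C * (\<integral>x. \<bar>u x\<bar> \<partial>M)"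
proof -
  have "\<bar>\<integral>x. \<phi> x * u x \<partial>M\<bar> \<le> (\<integral>x. \<bar>\<phi> x * u x\<bar> \<partial>M)"
    by (rule integral_abs_bound)
  also have "\<dots> \<le> (\<integral>x. C * \<bar>u x\<bar> \<partial>M)"
  proof (rule integral_mono_AE)
    show "AE x in M. \<bar>\<phi> x * u x\<bar> \<le> C * \<bar>u x\<bar>"
      using assms(3) by eventually_elim (simp add: abs_mult mult_right_mono)
  qed (use integrable_bounded_mult[OF assms] assms(1) in simp_all)
  finally show ?thesis
    by simp
qed

locale bounded_L1_functional = finite_measure M
  for M :: "'a measure" +
  fixes \<Lambda> :: "('a \<Rightarrow> real) \<Rightarrow> real" and C :: real
  assumes additive: "integrable M u \<Longrightarrow> integrable M v \<Longrightarrow> \<Lambda> (\<lambda>x. u x + v x) = \<Lambda> u + \<Lambda> v"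
    and homogeneous: "integrable M u \<Longrightarrow> \<Lambda> (\<lambda>x. c * u x) = c * \<Lambda> u"
    and bounded: "integrable M u \<Longrightarrow> \<bar>\<Lambda> u\<bar> \<le> C * (\<integral>x. \<bar>u x\<bar> \<partial>M)"

lemma bounded_L1_functional_multiplier:
  fixes \<phi> :: "'a \<Rightarrow> real"
  assumes "finite_measure M" "\<phi> \<in> borel_measurable M" "AE x in M. \<bar>\<phi> x\<bar> \<le> C"
  shows "bounded_L1_functional M (\<lambda>u. \<integral>x. \<phi> x * u x \<partial>M) C"
proof (rule bounded_L1_functional.intro[OF assms(1)], unfold_locales)
  fix u v :: "'a \<Rightarrow> real" and c :: real
  assume u: "integrable M u"
  show "(\<integral>x. \<phi> x * (c * u x) \<partial>M) = c * (\<integral>x. \<phi> x * u x \<partial>M)"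
    by (simp add: mult.left_commute)
  show "\<bar>\<integral>x. \<phi> x * u x \<partial>M\<bar> \<le> C * (\<integral>x. \<bar>u x\<bar> \<partial>M)"
    using abs_integral_bounded_mult_le[OF u assms(2,3)] .
  assume v: "integrable M v"
  show "(\<integral>x. \<phi> x * (u x + v x) \<partial>M) = (\<integral>x. \<phi> x * u x \<partial>M) + (\<integral>x. \<phi> x * v x \<partial>M)"
    using integrable_bounded_mult[OF u assms(2,3)] integrable_bounded_mult[OF v assms(2,3)]
    by (simp add: distrib_left)
qed

lemma bounded_L1_functional_ultrafilter_Lim:
  assumes "finite_measure M" "is_ultrafilter F" and \<Psi>: "\<And>s. bounded_L1_functional M (\<Psi> s) C"
  shows "bounded_L1_functional M (\<lambda>u. Lim F (\<lambda>s. \<Psi> s u)) C"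
proof -
  have lim: "((\<lambda>s. \<Psi> s u) \<longlongrightarrow> Lim F (\<lambda>s. \<Psi> s u)) F" if "integrable M u" for u
    using bounded_L1_functional.bounded[OF \<Psi> that]
    by (intro ultrafilter_bounded_tendsto_Lim[OF assms(2)] always_eventually) blast
  have F: "F \<noteq> bot"
    using assms(2) by (simp add: is_ultrafilter_def)
  show ?thesis
  proof (rule bounded_L1_functional.intro[OF assms(1)], unfold_locales)
    fix u v :: "'a \<Rightarrow> real" and c :: real
    assume u: "integrable M u"
    have "((\<lambda>s. \<Psi> s (\<lambda>x. c * u x)) \<longlongrightarrow> c * Lim F (\<lambda>s. \<Psi> s u)) F"
      using tendsto_mult_left[OF lim[OF u]] bounded_L1_functional.homogeneous[OF \<Psi> u] by simp
    then show "Lim F (\<lambda>s. \<Psi> s (\<lambda>x. c * u x)) = c * Lim F (\<lambda>s. \<Psi> s u)"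
      using F tendsto_Lim by blast
    show "\<bar>Lim F (\<lambda>s. \<Psi> s u)\<bar> \<le> C * (\<integral>x. \<bar>u x\<bar> \<partial>M)"
      using tendsto_upperbound[OF tendsto_rabs[OF lim[OF u]] _ F] bounded_L1_functional.bounded[OF \<Psi> u]
      by (simp add: always_eventually)
    assume v: "integrable M v"
    have "((\<lambda>s. \<Psi> s (\<lambda>x. u x + v x)) \<longlongrightarrow> Lim F (\<lambda>s. \<Psi> s u) + Lim F (\<lambda>s. \<Psi> s v)) F"
      using tendsto_add[OF lim[OF u] lim[OF v]] bounded_L1_functional.additive[OF \<Psi> u v] by simp
    then show "Lim F (\<lambda>s. \<Psi> s (\<lambda>x. u x + v x)) = Lim F (\<lambda>s. \<Psi> s u) + Lim F (\<lambda>s. \<Psi> s v)"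
      using F tendsto_Lim by blast
  qed
qed

context bounded_L1_functional
begin

lemma diff: "integrable M u \<Longrightarrow> integrable M v \<Longrightarrow> \<Lambda> (\<lambda>x. u x - v x) = \<Lambda> u - \<Lambda> v"
  using additive[of u "\<lambda>x. (-1) * v x"] homogeneous[of v "-1"] by simp

lemma zero [simp]: "\<Lambda> (\<lambda>x. 0) = 0"
  using homogeneous[of "\<lambda>x. 0" 0] by simp

lemma indicator_empty [simp]: "\<Lambda> (indicator {}) = 0"
proof -
  have "indicator {} = (\<lambda>x::'a. 0::real)"
    by (simp add: fun_eq_iff)
  then show ?thesis
    by simp
qed

lemma integrable_indicator: "A \<in> sets M \<Longrightarrow> integrable M (indicator A :: 'a \<Rightarrow> real)"
  by (intro integrable_real_indicator) (auto simp: less_top[symmetric])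

lemma abs_indicator_le: "A \<in> sets M \<Longrightarrow> \<bar>\<Lambda> (indicator A)\<bar> \<le> C * measure M A"
  using bounded[OF integrable_indicator] by simp

lemma indicator_Un:
  assumes "A \<in> sets M" "B \<in> sets M" "A \<inter> B = {}"
  shows "\<Lambda> (indicator (A \<union> B)) = \<Lambda> (indicator A) + \<Lambda> (indicator B)"
proof -
  have "indicator (A \<union> B) = (\<lambda>x. indicator A x + indicator B x :: real)"
    using assms(3) by (auto simp: fun_eq_iff indicator_def)
  then show ?thesis
    using additive[OF integrable_indicator integrable_indicator] assms by simp
qed

lemma tendsto_L1:
  assumes "\<And>i. integrable M (s i)" "integrable M u"
    and "(\<lambda>i. \<integral>x. \<bar>s i x - u x\<bar> \<partial>M) \<longlonglongrightarrow> 0"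
  shows "(\<lambda>i. \<Lambda> (s i)) \<longlonglongrightarrow> \<Lambda> u"
proof (rule Lim_transform2[OF tendsto_const], rule Lim_null_comparison[OF always_eventually], rule allI)
  show "norm (\<Lambda> u - \<Lambda> (s i)) \<le> C * (\<integral>x. \<bar>s i x - u x\<bar> \<partial>M)" for i
    using bounded[of "\<lambda>x. s i x - u x"] diff[of "s i" u] assms(1,2) by (simp add: abs_minus_commute)
  show "(\<lambda>i. C * (\<integral>x. \<bar>s i x - u x\<bar> \<partial>M)) \<longlonglongrightarrow> 0"
    using tendsto_mult_right_zero[OF assms(3)] .
qed

lemma indicator_Diff:
  assumes "A \<in> sets M" "B \<in> sets M" "A \<subseteq> B"
  shows "\<Lambda> (indicator (B - A)) = \<Lambda> (indicator B) - \<Lambda> (indicator A)"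
proof -
  have "A \<union> (B - A) = B"
    using assms(3) by blast
  then show ?thesis
    using indicator_Un[of A "B - A"] assms(1,2) by (simp add: Diff_disjoint sets.Diff)
qed

lemma indicator_finite_UN:
  fixes n :: nat
  assumes A: "range A \<subseteq> sets M" and disj: "disjoint_family A"
  shows "(\<Sum>i<n. \<Lambda> (indicator (A i))) = \<Lambda> (indicator (\<Union>i<n. A i))"
proof (induction n)
  case (Suc n)
  have "(\<Union>i<Suc n. A i) = (\<Union>i<n. A i) \<union> A n"
    by (auto simp: lessThan_Suc)
  moreover have "(\<Union>i<n. A i) \<inter> A n = {}"
    using disj unfolding disjoint_family_on_def by (auto dest: less_imp_neq)
  ultimately show ?case
    using Suc indicator_Un[of "\<Union>i<n. A i" "A n"] A by auto
qed simp

lemma indicator_sums: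
  assumes A: "range A \<subseteq> sets M" and disj: "disjoint_family A"
  shows "(\<lambda>i. \<Lambda> (indicator (A i))) sums \<Lambda> (indicator (\<Union>i. A i))"
proof -
  define B where "B n = (\<Union>i<n. A i)" for n
  let ?U = "\<Union>i. A i"
  have B: "B n \<in> sets M" "B n \<subseteq> ?U" for n
    unfolding B_def using A by auto
  have U: "?U \<in> sets M"
    using A by auto
  have "(\<lambda>n. measure M (B n)) \<longlonglongrightarrow> measure M ?U"
  proof -
    have "incseq B"
      unfolding incseq_def B_def by force
    moreover have "(\<Union>n. B n) = ?U"
      by (auto simp: B_def)
    ultimately show ?thesis
      using finite_Lim_measure_incseq[of B] B by auto
  qed
  then have "(\<lambda>n. C * (measure M ?U - measure M (B n))) \<longlonglongrightarrow> C * (measure M ?U - measure M ?U)"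
    by (intro tendsto_mult_left tendsto_diff tendsto_const)
  then have bound_to_0: "(\<lambda>n. C * (measure M ?U - measure M (B n))) \<longlonglongrightarrow> 0"
    by simp
  have "\<bar>\<Lambda> (indicator ?U) - \<Lambda> (indicator (B n))\<bar> \<le> C * (measure M ?U - measure M (B n))" for n
    using abs_indicator_le[of "?U - B n"] indicator_Diff[OF B(1) U B(2)] finite_measure_Diff[OF U B(1,2)]
      B(1) U by (simp add: sets.Diff)
  then have "(\<lambda>n. \<Lambda> (indicator ?U) - \<Lambda> (indicator (B n))) \<longlonglongrightarrow> 0"
    by (intro Lim_null_comparison[OF always_eventually bound_to_0]) simp
  then have "(\<lambda>n. \<Lambda> (indicator (B n))) \<longlonglongrightarrow> \<Lambda> (indicator ?U)"
    by (rule Lim_transform2[OF tendsto_const])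
  then show ?thesis
    unfolding sums_def B_def indicator_finite_UN[OF A disj] .
qed

text \<open>
  Adding \<open>C * measure M A\<close> makes \<open>A \<mapsto> \<Lambda> (indicator A)\<close> a positive measure; its
  Radon-Nikodym density minus \<open>C\<close> represents \<open>\<Lambda>\<close>.
\<close>

definition shifted :: "'a measure" where
  "shifted = measure_of (space M) (sets M) (\<lambda>A. ennreal (\<Lambda> (indicator A) + C * measure M A))"

lemma sets_shifted [simp]: "sets shifted = sets M"
  unfolding shifted_def by (simp add: sets.sigma_sets_eq)

lemma emeasure_shifted:
  assumes "A \<in> sets M"
  shows "emeasure shifted A = ennreal (\<Lambda> (indicator A) + C * measure M A)"
  unfolding shifted_def
proof (rule emeasure_measure_of_sigma[OF sets.sigma_algebra_axioms _ _ assms])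
  show "positive (sets M) (\<lambda>A. ennreal (\<Lambda> (indicator A) + C * measure M A))"
    by (simp add: positive_def)
  show "countably_additive (sets M) (\<lambda>A. ennreal (\<Lambda> (indicator A) + C * measure M A))"
    unfolding countably_additive_def
  proof (intro allI impI)
    fix A :: "nat \<Rightarrow> 'a set"
    assume A: "range A \<subseteq> sets M" "disjoint_family A"
    have sums: "(\<lambda>i. \<Lambda> (indicator (A i)) + C * measure M (A i)) sums
        (\<Lambda> (indicator (\<Union>i. A i)) + C * measure M (\<Union>i. A i))"
      by (intro sums_add sums_mult indicator_sums finite_measure_UNION A)
    have "0 \<le> \<Lambda> (indicator (A i)) + C * measure M (A i)" for i
      using abs_indicator_le[of "A i"] A(1) by auto
    then show "(\<Sum>i. ennreal (\<Lambda> (indicator (A i)) + C * measure M (A i))) =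
        ennreal (\<Lambda> (indicator (\<Union>i. A i)) + C * measure M (\<Union>i. A i))"
      using sums by (simp add: suminf_ennreal2 sums_summable sums_unique[symmetric])
  qed
qed

lemma absolutely_continuous_shifted: "absolutely_continuous M shifted"
  unfolding absolutely_continuous_def
proof
  fix A assume "A \<in> null_sets M"
  then have A: "A \<in> sets M" "measure M A = 0"
    by (auto simp: null_sets_def measure_def)
  then have "\<Lambda> (indicator A) = 0"
    using abs_indicator_le[OF A(1)] by simp
  then show "A \<in> null_sets shifted"
    using A by (simp add: null_sets_def emeasure_shifted)
qed

lemma indicator_representation:
  obtains g where "g \<in> borel_measurable M"
    and "\<And>A. A \<in> sets M \<Longrightarrow> integrable M (\<lambda>x. g x * indicator A x) \<and>
      (\<integral>x. g x * indicator A x \<partial>M) = \<Lambda> (indicator A)"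
proof -
  obtain \<rho> where \<rho>: "\<rho> \<in> borel_measurable M" "density M \<rho> = shifted"
    using Radon_Nikodym[OF absolutely_continuous_shifted] by auto
  have finite: "AE x in M. \<rho> x \<noteq> \<infinity>"
  proof (rule nn_integral_PInf_AE[OF \<rho>(1)])
    have "(\<integral>\<^sup>+x. \<rho> x \<partial>M) = (\<integral>\<^sup>+x. \<rho> x * indicator (space M) x \<partial>M)"
      by (intro nn_integral_cong) simp
    also have "\<dots> = emeasure shifted (space M)"
      using emeasure_density[OF \<rho>(1) sets.top] \<rho>(2) by simp
    finally show "(\<integral>\<^sup>+x. \<rho> x \<partial>M) \<noteq> \<infinity>"
      using emeasure_shifted[OF sets.top] by simp
  qed
  define g where "g x = enn2real (\<rho> x) - C" for x
  show thesis
  proof (rule that)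
    show g_meas: "g \<in> borel_measurable M"
      unfolding g_def using \<rho>(1) by measurable
    fix A assume A: "A \<in> sets M"
    have "(\<integral>\<^sup>+x. ennreal (enn2real (\<rho> x) * indicator A x) \<partial>M) = (\<integral>\<^sup>+x. \<rho> x * indicator A x \<partial>M)"
      using finite by (intro nn_integral_cong_AE) (auto simp: indicator_def less_top)
    also have "\<dots> = ennreal (\<Lambda> (indicator A) + C * measure M A)"
      using emeasure_density[OF \<rho>(1) A] \<rho>(2) emeasure_shifted[OF A] by simp
    finally have nn: "(\<integral>\<^sup>+x. ennreal (enn2real (\<rho> x) * indicator A x) \<partial>M) =
        ennreal (\<Lambda> (indicator A) + C * measure M A)" .
    have int_\<rho>: "integrable M (\<lambda>x. enn2real (\<rho> x) * indicator A x)"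
      using nn \<rho>(1) A by (intro integrableI_nonneg) auto
    have "(\<integral>x. enn2real (\<rho> x) * indicator A x \<partial>M) = \<Lambda> (indicator A) + C * measure M A"
      using nn_integral_eq_integral[OF int_\<rho>] nn abs_indicator_le[OF A] by simp
    moreover have "(\<lambda>x. g x * indicator A x) = (\<lambda>x. enn2real (\<rho> x) * indicator A x - C * indicator A x)"
      by (auto simp: g_def fun_eq_iff algebra_simps)
    ultimately show "integrable M (\<lambda>x. g x * indicator A x) \<and>
        (\<integral>x. g x * indicator A x \<partial>M) = \<Lambda> (indicator A)"
      using int_\<rho> integrable_indicator[OF A] A by simp
  qed
qed

theorem representation:
  obtains g where "g \<in> borel_measurable M" "AE x in M. \<bar>g x\<bar> \<le> C"
    and "\<And>u. integrable M u \<Longrightarrow> \<Lambda> u = (\<integral>x. g x * u x \<partial>M)"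
proof -
  obtain g where g_meas [measurable]: "g \<in> borel_measurable M"
    and g_indicator: "\<And>A. A \<in> sets M \<Longrightarrow> integrable M (\<lambda>x. g x * indicator A x) \<and>
      (\<integral>x. g x * indicator A x \<partial>M) = \<Lambda> (indicator A)"
    using indicator_representation by blast
  have "AE x in M. x \<in> space M \<longrightarrow> \<bar>g x\<bar> \<le> C"
    using g_indicator abs_indicator_le
    by (intro AE_abs_le_if_integral_indicator_le) (simp_all add: less_top[symmetric])
  then have g_bound: "AE x in M. \<bar>g x\<bar> \<le> C"
    using AE_space by eventually_elim simp
  interpret G: bounded_L1_functional M "\<lambda>u. \<integral>x. g x * u x \<partial>M" C
    by (rule bounded_L1_functional_multiplier[OF finite_measure_axioms g_meas g_bound])
  have "\<Lambda> u = (\<integral>x. g x * u x \<partial>M)" if "integrable M u" for u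
    using that
  proof (induction rule: integrable_induct)
    case (base A c)
    then have "\<Lambda> (\<lambda>x. indicator A x *\<^sub>R c) = c * (\<integral>x. g x * indicator A x \<partial>M)"
      using homogeneous[OF integrable_indicator, of A c] g_indicator[of A] by (simp add: mult.commute)
    then show ?case
      by (simp add: mult_ac)
  next
    case (add u v)
    then show ?case
      using additive[of u v] G.additive[of u v] by simp
  next
    case (lim u s)
    have "(\<lambda>i. \<integral>x. \<bar>s i x - u x\<bar> \<partial>M) \<longlonglongrightarrow> 0"
      using integral_abs_diff_tendsto_0[OF lim(1,4,2) lim(3)[unfolded real_norm_def]] .
    then have "(\<lambda>i. \<Lambda> (s i)) \<longlonglongrightarrow> \<Lambda> u" "(\<lambda>i. \<integral>x. g x * s i x \<partial>M) \<longlonglongrightarrow> (\<integral>x. g x * u x \<partial>M)"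
      using lim(1,4) by (intro tendsto_L1 G.tendsto_L1; simp)+
    then show ?case
      using lim(5) LIMSEQ_unique by simp
  qed
  then show thesis
    using that g_meas g_bound by blast
qed

end

section \<open>Weak-* limits of translates\<close>

lemma AE_lebesgue_affine:
  fixes c t :: real
  assumes P: "AE x in lebesgue. P x" and c: "c \<noteq> 0"
  shows "AE x in lebesgue. P (t + c * x)"
proof -
  have "AE x in density (distr lebesgue lebesgue (\<lambda>x. t + c * x)) (\<lambda>_. ennreal \<bar>c\<bar>). P x"
    using P by (subst (asm) lebesgue_real_affine[OF c, of t])
  then have "AE x in distr lebesgue lebesgue (\<lambda>x. t + c * x). P x"
    using c by (simp add: AE_density)
  moreover have "(\<lambda>x. t + c * x) \<in> lebesgue \<rightarrow>\<^sub>M lebesgue"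
    using lebesgue_affine_measurable[where c="\<lambda>x::real. c"] c by simp
  ultimately show ?thesis
    by (rule AE_distrD[rotated])
qed

lemma set_integrable_exp_minus: "set_integrable lebesgue {c..} (\<lambda>x::real. exp (- x))"
  and set_integral_exp_minus: "(LINT x:{c..}|lebesgue. exp (- x)) = exp (- c)"
proof -
  have "((\<lambda>x::real. exp (- x)) has_integral exp (- c)) {c..}"
    using has_integral_exp_minus_to_infinity[of 1 c] by simp
  moreover show integrable: "set_integrable lebesgue {c..} (\<lambda>x::real. exp (- x))"
    using calculation by (intro nonnegative_absolutely_integrable_1) (auto simp: integrable_on_def)
  ultimately show "(LINT x:{c..}|lebesgue. exp (- x)) = exp (- c)"
    using set_lebesgue_integral_eq_integral(2)[OF integrable] by (simp add: integral_unique)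
qed

lemma borel_measurable_lebesgue_elementary [measurable]:
  "(\<lambda>x::real. indicator {0..} x :: real) \<in> borel_measurable lebesgue"
  "(\<lambda>x::real. exp x) \<in> borel_measurable lebesgue"
  "(\<lambda>x::real. exp (- x)) \<in> borel_measurable lebesgue"
  "(\<lambda>x::real. indicator {0..} x * exp (- x)) \<in> borel_measurable lebesgue"
  by (intro measurable_completion; measurable)+

lemma borel_measurable_lebesgue_exp_weight_density:
  "(\<lambda>x::real. ennreal (indicator {0..} x * exp (- x))) \<in> borel_measurable lebesgue"
  by measurable

text \<open>
  \<open>h \<mapsto> h * exp\<close> identifies \<open>L\<^sup>1\<close> of \<open>[0,\<infinity>)\<close> with \<open>L\<^sup>1\<close> of the finite measure \<open>exp (-x) dx\<close>,
  for which \<open>L\<^sup>\<infinity>\<close> is the dual of \<open>L\<^sup>1\<close>.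
\<close>

definition exp_weight :: "real measure" where
  "exp_weight = density lebesgue (\<lambda>x. ennreal (indicator {0..} x * exp (- x)))"

lemma sets_exp_weight [measurable_cong, simp]: "sets exp_weight = sets lebesgue"
  and space_exp_weight [simp]: "space exp_weight = UNIV"
  unfolding exp_weight_def by simp_all

lemma measurable_exp_weight [simp]: "measurable exp_weight N = measurable lebesgue N"
  by (rule measurable_cong_sets) simp_all

lemma AE_exp_weight: "(AE x in exp_weight. P x) \<longleftrightarrow> (AE x in lebesgue. 0 \<le> x \<longrightarrow> P x)"
  unfolding exp_weight_def AE_density[OF borel_measurable_lebesgue_exp_weight_density]
  by (simp add: indicator_def)

lemma finite_measure_exp_weight: "finite_measure exp_weight"
proof
  have "emeasure exp_weight UNIV = (\<integral>\<^sup>+x. ennreal (indicator {0..} x * exp (- x)) \<partial>lebesgue)"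
    unfolding exp_weight_def
    using emeasure_density[OF borel_measurable_lebesgue_exp_weight_density sets.top] by simp
  also have "\<dots> < \<infinity>"
    using set_integrable_exp_minus[of 0]
    unfolding set_integrable_def integrable_iff_bounded by simp
  finally show "emeasure exp_weight (space exp_weight) \<noteq> \<infinity>"
    by simp
qed

lemma integral_exp_weight:
  fixes v h :: "real \<Rightarrow> real"
  assumes "v \<in> borel_measurable lebesgue" "(\<lambda>x. indicator {0..} x * h x) \<in> borel_measurable lebesgue"
  shows "(\<integral>x. v x * (indicator {0..} x * h x * exp x) \<partial>exp_weight) = (LINT x:{0..}|lebesgue. v x * h x)"
proof -
  have "(\<lambda>x. v x * (indicator {0..} x * h x) * exp x) \<in> borel_measurable lebesgue"
    using assms by measurable
  then have "(\<lambda>x. v x * (indicator {0..} x * h x * exp x)) \<in> borel_measurable lebesgue"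
    by (simp add: mult.assoc)
  then have "(\<integral>x. v x * (indicator {0..} x * h x * exp x) \<partial>exp_weight) =
      (\<integral>x. indicator {0..} x * exp (- x) * (v x * (indicator {0..} x * h x * exp x)) \<partial>lebesgue)"
    unfolding exp_weight_def by (subst integral_density) simp_all
  also have "\<dots> = (LINT x:{0..}|lebesgue. v x * h x)"
    unfolding set_lebesgue_integral_def
    by (intro Bochner_Integration.integral_cong) (auto simp: indicator_def exp_minus field_simps)
  finally show ?thesis .
qed

lemma integrable_exp_weight:
  fixes h :: "real \<Rightarrow> real"
  assumes "set_integrable lebesgue {0..} h"
  shows "integrable exp_weight (\<lambda>x. indicator {0..} x * h x * exp x)"
proof -
  have "integrable lebesgue (\<lambda>x. indicator {0..} x * h x)"
    using assms unfolding set_integrable_def by simp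
  moreover have "(\<lambda>x. indicator {0..} x * exp (- x) * (indicator {0..} x * h x * exp x)) =
      (\<lambda>x. indicator {0..} x * h x)"
    by (auto simp: fun_eq_iff indicator_def exp_minus field_simps)
  ultimately show ?thesis
    unfolding exp_weight_def
    by (subst integrable_density) (simp_all add: borel_measurable_integrable)
qed

lemma Linf_RplusE:
  assumes "f \<in> Linf_Rplus"
  obtains C where "0 \<le> C" "(\<lambda>x. indicator {0..} x * f x) \<in> borel_measurable lebesgue"
    "AE x in lebesgue. 0 \<le> x \<longrightarrow> \<bar>f x\<bar> \<le> C"
proof -
  obtain C where "AE x in lebesgue. x \<in> {0..} \<longrightarrow> \<bar>f x\<bar> \<le> C"
    "(\<lambda>x. indicator {0..} x * f x) \<in> borel_measurable lebesgue"
    using assms unfolding Linf_Rplus_def set_borel_measurable_def by auto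
  moreover from this(1) have "AE x in lebesgue. 0 \<le> x \<longrightarrow> \<bar>f x\<bar> \<le> \<bar>C\<bar>"
    by eventually_elim auto
  ultimately show thesis
    using that[of "\<bar>C\<bar>"] by simp
qed

lemma Linf_Rplus_affine:
  fixes f :: "real \<Rightarrow> real"
  assumes "(\<lambda>x. indicator {0..} x * f x) \<in> borel_measurable lebesgue"
    and "AE x in lebesgue. 0 \<le> x \<longrightarrow> \<bar>f x\<bar> \<le> C" and "c \<noteq> 0"
  shows "(\<lambda>x. indicator {0..} (t + c * x) * f (t + c * x)) \<in> borel_measurable lebesgue"
    and "AE x in lebesgue. 0 \<le> t + c * x \<longrightarrow> \<bar>f (t + c * x)\<bar> \<le> C"
  using borel_measurable_affine[OF assms(1,3), of t] AE_lebesgue_affine[OF assms(2,3)] by simp_all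

lemma translate_exp_weight:
  assumes f_meas: "(\<lambda>x. indicator {0..} x * f x) \<in> borel_measurable lebesgue"
    and f_bound: "AE x in lebesgue. 0 \<le> x \<longrightarrow> \<bar>f x\<bar> \<le> C" and "0 \<le> C"
  shows "(\<lambda>x. indicator {0..} (s + x) * f (s + x)) \<in> borel_measurable exp_weight"
    and "AE x in exp_weight. \<bar>indicator {0..} (s + x) * f (s + x)\<bar> \<le> C"
    and "h \<in> L1_Rplus \<Longrightarrow> 0 \<le> s \<Longrightarrow>
      (\<integral>x. indicator {0..} (s + x) * f (s + x) * (indicator {0..} x * h x * exp x) \<partial>exp_weight) =
      (LINT x:{0..}|lebesgue. f (x + s) * h x)"
proof -
  show meas: "(\<lambda>x. indicator {0..} (s + x) * f (s + x)) \<in> borel_measurable exp_weight"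
    using Linf_Rplus_affine(1)[OF f_meas f_bound, of 1 s] by simp
  show "AE x in exp_weight. \<bar>indicator {0..} (s + x) * f (s + x)\<bar> \<le> C"
    using Linf_Rplus_affine(2)[OF f_meas f_bound, of 1 s] \<open>0 \<le> C\<close>
    unfolding AE_exp_weight by (auto simp: indicator_def elim: eventually_mono)
  assume "h \<in> L1_Rplus" "0 \<le> s"
  then have "(\<lambda>x. indicator {0..} x * h x) \<in> borel_measurable lebesgue"
    unfolding L1_Rplus_def set_integrable_def by (simp add: borel_measurable_integrable)
  then have "(\<integral>x. indicator {0..} (s + x) * f (s + x) * (indicator {0..} x * h x * exp x) \<partial>exp_weight) =
      (LINT x:{0..}|lebesgue. indicator {0..} (s + x) * f (s + x) * h x)"
    by (rule integral_exp_weight[OF meas[unfolded measurable_exp_weight]])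
  also have "\<dots> = (LINT x:{0..}|lebesgue. f (x + s) * h x)"
    using \<open>0 \<le> s\<close> by (intro set_lebesgue_integral_cong) (auto simp: add.commute)
  finally show "(\<integral>x. indicator {0..} (s + x) * f (s + x) * (indicator {0..} x * h x * exp x) \<partial>exp_weight) =
      (LINT x:{0..}|lebesgue. f (x + s) * h x)" .
qed

lemma weak_star_lim_exists:
  assumes f: "f \<in> Linf_Rplus" and U: "is_ultrafilter (omega_filter \<omega>)"
    and nonneg: "eventually (\<lambda>s. 0 \<le> s) (omega_filter \<omega>)"
  shows "\<exists>g. weak_star_lim f \<omega> g"
proof -
  obtain C where C: "0 \<le> C" and f_meas: "(\<lambda>x. indicator {0..} x * f x) \<in> borel_measurable lebesgue"
    and f_bound: "AE x in lebesgue. 0 \<le> x \<longrightarrow> \<bar>f x\<bar> \<le> C"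
    using f by (rule Linf_RplusE)
  note translate = translate_exp_weight[OF f_meas f_bound C]
  define \<Psi> where "\<Psi> s u = (\<integral>x. indicator {0..} (s + x) * f (s + x) * u x \<partial>exp_weight)" for s u
  have \<Psi>: "bounded_L1_functional exp_weight (\<Psi> s) C" for s
    unfolding \<Psi>_def by (rule bounded_L1_functional_multiplier[OF finite_measure_exp_weight translate(1,2)])
  interpret bounded_L1_functional exp_weight "\<lambda>u. Lim (omega_filter \<omega>) (\<lambda>s. \<Psi> s u)" C
    by (rule bounded_L1_functional_ultrafilter_Lim[OF finite_measure_exp_weight U \<Psi>])
  obtain g where g_meas: "g \<in> borel_measurable exp_weight" and g_bound: "AE x in exp_weight. \<bar>g x\<bar> \<le> C"
    and g_rep: "\<And>u. integrable exp_weight u \<Longrightarrow> Lim (omega_filter \<omega>) (\<lambda>s. \<Psi> s u) = (\<integral>x. g x * u x \<partial>exp_weight)"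
    using representation by blast
  have "g \<in> Linf_Rplus"
    using g_meas g_bound unfolding Linf_Rplus_def set_borel_measurable_def AE_exp_weight
    by (auto intro: borel_measurable_times[OF borel_measurable_lebesgue_elementary(1)])
  moreover have "((\<lambda>s. LINT x:{0..}|lebesgue. f (x + s) * h x) \<longlongrightarrow> (LINT x:{0..}|lebesgue. g x * h x))
      (omega_filter \<omega>)" if h: "h \<in> L1_Rplus" for h
  proof -
    define u where "u x = indicator {0..} x * h x * exp x" for x
    have u: "integrable exp_weight u"
      using h unfolding u_def L1_Rplus_def by (simp add: integrable_exp_weight)
    have "((\<lambda>s. \<Psi> s u) \<longlongrightarrow> (\<integral>x. g x * u x \<partial>exp_weight)) (omega_filter \<omega>)"
      unfolding g_rep[OF u, symmetric] using bounded_L1_functional.bounded[OF \<Psi> u]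
      by (intro ultrafilter_bounded_tendsto_Lim[OF U] always_eventually) blast
    moreover have "(\<integral>x. g x * u x \<partial>exp_weight) = (LINT x:{0..}|lebesgue. g x * h x)"
      using h g_meas unfolding u_def L1_Rplus_def set_integrable_def
      by (intro integral_exp_weight) (simp_all add: borel_measurable_integrable)
    moreover have "eventually (\<lambda>s. \<Psi> s u = (LINT x:{0..}|lebesgue. f (x + s) * h x)) (omega_filter \<omega>)"
      using nonneg by eventually_elim (use h in \<open>simp add: \<Psi>_def u_def translate(3)\<close>)
    ultimately show ?thesis
      using Lim_transform_eventually by fastforce
  qed
  ultimately show ?thesis
    unfolding weak_star_lim_def by blast
qed

lemma emeasure_lebesgue_Icc_finite: "emeasure lebesgue {a..b::real} < \<infinity>"
  using lmeasurable_cbox[of a b] unfolding fmeasurable_def cbox_interval by simp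

lemma weak_star_lim_indicator_bound:
  assumes f_meas: "(\<lambda>x. indicator {0..} x * f x) \<in> borel_measurable lebesgue"
    and f_bound: "AE x in lebesgue. 0 \<le> x \<longrightarrow> \<bar>f x\<bar> \<le> C" and "0 \<le> C"
    and g: "weak_star_lim f \<omega> g" and F: "omega_filter \<omega> \<noteq> bot"
    and nonneg: "eventually (\<lambda>s. 0 \<le> s) (omega_filter \<omega>)"
    and A: "A \<in> sets lebesgue" "A \<subseteq> {0..}" "emeasure lebesgue A < \<infinity>"
  shows "\<bar>LINT x:{0..}|lebesgue. g x * indicator A x\<bar> \<le> C * measure lebesgue A"
proof -
  have A_int: "integrable lebesgue (indicator A :: real \<Rightarrow> real)"
    using A by simp
  then have "indicator A \<in> L1_Rplus"
    using A(2) unfolding L1_Rplus_def set_integrable_def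
    by (simp add: indicator_inter_arith[symmetric] Int_absorb1)
  then have lim: "((\<lambda>s. LINT x:{0..}|lebesgue. f (x + s) * indicator A x) \<longlongrightarrow>
      (LINT x:{0..}|lebesgue. g x * indicator A x)) (omega_filter \<omega>)"
    using g unfolding weak_star_lim_def by blast
  have "\<bar>LINT x:{0..}|lebesgue. f (x + s) * indicator A x\<bar> \<le> C * measure lebesgue A" if "0 \<le> s" for s
  proof -
    have "(LINT x:{0..}|lebesgue. f (x + s) * indicator A x) =
        (\<integral>x. indicator {0..} (s + 1 * x) * f (s + 1 * x) * indicator A x \<partial>lebesgue)"
      unfolding set_lebesgue_integral_def using A(2) that
      by (intro Bochner_Integration.integral_cong) (auto simp: indicator_def add.commute)
    also have "\<bar>\<dots>\<bar> \<le> C * (\<integral>x. \<bar>indicator A x :: real\<bar> \<partial>lebesgue)"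
      using Linf_Rplus_affine[OF f_meas f_bound, of 1 s] \<open>0 \<le> C\<close>
      by (intro abs_integral_bounded_mult_le[OF A_int]) (auto simp: indicator_def elim: eventually_mono)
    finally show ?thesis
      using A_int by simp
  qed
  then have "eventually (\<lambda>s. \<bar>LINT x:{0..}|lebesgue. f (x + s) * indicator A x\<bar> \<le> C * measure lebesgue A)
      (omega_filter \<omega>)"
    using nonneg by (auto elim: eventually_mono)
  then show ?thesis
    using tendsto_upperbound[OF tendsto_rabs[OF lim] _ F] by blast
qed

lemma weak_star_lim_bound:
  assumes f_meas: "(\<lambda>x. indicator {0..} x * f x) \<in> borel_measurable lebesgue"
    and f_bound: "AE x in lebesgue. 0 \<le> x \<longrightarrow> \<bar>f x\<bar> \<le> C" and "0 \<le> C"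
    and g: "weak_star_lim f \<omega> g" and F: "omega_filter \<omega> \<noteq> bot"
    and nonneg: "eventually (\<lambda>s. 0 \<le> s) (omega_filter \<omega>)"
  shows "AE x in lebesgue. 0 \<le> x \<longrightarrow> \<bar>g x\<bar> \<le> C"
proof -
  obtain C' where "0 \<le> C'" and g_meas: "(\<lambda>x. indicator {0..} x * g x) \<in> borel_measurable lebesgue"
    and g_bound: "AE x in lebesgue. 0 \<le> x \<longrightarrow> \<bar>g x\<bar> \<le> C'"
    using g unfolding weak_star_lim_def by (auto elim: Linf_RplusE)
  have "AE x in lebesgue. x \<in> {0..real n} \<longrightarrow> \<bar>indicator {0..} x * g x\<bar> \<le> C" for n :: nat
  proof (rule AE_abs_le_if_integral_indicator_le[OF g_meas])
    fix A assume A: "A \<in> sets lebesgue" "A \<subseteq> {0..real n}"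
    then have A_finite: "emeasure lebesgue A < \<infinity>"
      using emeasure_mono[OF A(2), of lebesgue] emeasure_lebesgue_Icc_finite[of 0 "real n"]
      by (simp add: le_less_trans)
    have "AE x in lebesgue. \<bar>indicator {0..} x * g x\<bar> \<le> C'"
      using g_bound by eventually_elim (use \<open>0 \<le> C'\<close> in \<open>simp add: indicator_def\<close>)
    then have "integrable lebesgue (\<lambda>x. indicator {0..} x * g x * indicator A x)"
      using A A_finite by (intro integrable_bounded_mult[OF _ g_meas]) simp_all
    moreover have "\<bar>LINT x:{0..}|lebesgue. g x * indicator A x\<bar> \<le> C * measure lebesgue A"
      using A A_finite by (intro weak_star_lim_indicator_bound[OF assms]) auto
    ultimately show "integrable lebesgue (\<lambda>x. indicator {0..} x * g x * indicator A x) \<and>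
        \<bar>\<integral>x. indicator {0..} x * g x * indicator A x \<partial>lebesgue\<bar> \<le> C * measure lebesgue A"
      unfolding set_lebesgue_integral_def by (simp add: mult_ac)
  qed (simp_all add: emeasure_lebesgue_Icc_finite)
  then have "AE x in lebesgue. \<forall>n::nat. x \<in> {0..real n} \<longrightarrow> \<bar>indicator {0..} x * g x\<bar> \<le> C"
    unfolding AE_all_countable by blast
  then show ?thesis
  proof eventually_elim
    case (elim x)
    show ?case
      using elim[rule_format, of "nat \<lceil>x\<rceil>"] by (auto simp: real_nat_ceiling_ge)
  qed
qed

section \<open>The integral formula for \<open>\<chi>\<^sub>\<omega>\<close>\<close>

lemma lebesgue_set_integral_reflect:
  fixes \<psi> :: "real \<Rightarrow> real"
  shows "(LINT u:A|lebesgue. \<psi> u) = (LINT y:{y. c - y \<in> A}|lebesgue. \<psi> (c - y))"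
  unfolding set_lebesgue_integral_def
  by (subst lebesgue_integral_real_affine[where c="-1" and t=c])
     (auto intro!: Bochner_Integration.integral_cong split: split_indicator)

lemma unit_interval_reflect:
  fixes \<psi> :: "real \<Rightarrow> real"
  shows "(LINT u:{real n<..real n + 1}|lebesgue. \<psi> u) = (LINT y:{0..<1}|lebesgue. \<psi> (real (Suc n) - y))"
proof -
  have "(LINT u:{real n<..real n + 1}|lebesgue. \<psi> u) =
      (LINT y:{y. real (Suc n) - y \<in> {real n<..real n + 1}}|lebesgue. \<psi> (real (Suc n) - y))"
    by (rule lebesgue_set_integral_reflect)
  also have "{y. real (Suc n) - y \<in> {real n<..real n + 1}} = {0..<1}"
    by auto
  finally show ?thesis .
qed

lemma unit_interval_exp_L1_Rplus: "(\<lambda>y. indicator {0..<1} y * exp (y - c)) \<in> L1_Rplus"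
proof -
  have "set_integrable lebesgue {0..1} (\<lambda>y. exp (y - c))"
    by (intro absolutely_integrable_continuous_real continuous_intros)
  then have "set_integrable lebesgue {0..<1} (\<lambda>y. exp (y - c))"
    by (rule set_integrable_subset) auto
  moreover have "(\<lambda>y. indicator {0..} y *\<^sub>R (indicator {0..<1} y * exp (y - c))) =
      (\<lambda>y. indicator {0..<1} y *\<^sub>R exp (y - c))"
    by (auto simp: fun_eq_iff indicator_def)
  ultimately show ?thesis
    unfolding L1_Rplus_def set_integrable_def mem_Collect_eq by (simp only:)
qed

lemma set_integral_split_unit_intervals:
  fixes \<psi> :: "real \<Rightarrow> real"
  assumes \<psi>: "set_integrable lebesgue S \<psi>" and S: "S \<in> sets lebesgue" "{0<..real M} \<subseteq> S" "S \<subseteq> {0..}"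
  shows "(LINT u:S|lebesgue. \<psi> u) =
    (\<Sum>n<M. LINT u:{real n<..real n + 1}|lebesgue. \<psi> u) + (LINT u:S \<inter> {real M<..}|lebesgue. \<psi> u)"
  using S(2)
proof (induction M)
  case 0
  have meas: "set_borel_measurable lebesgue T \<psi>" if "T \<in> sets lebesgue" "T \<subseteq> S" for T
    using set_integrable_subset[OF \<psi> that] unfolding set_integrable_def set_borel_measurable_def
    by (rule borel_measurable_integrable)
  have "AE x in lebesgue. x \<notin> {0}"
    by (rule AE_not_in) simp
  then have "AE x in lebesgue. x \<in> S \<inter> {0<..} \<longleftrightarrow> x \<in> S"
    by eventually_elim (use S(3) in auto)
  then have "(LINT u:S|lebesgue. \<psi> u) = (LINT u:S \<inter> {0<..}|lebesgue. \<psi> u)"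
    by (intro set_integral_cong_set meas) (use S(1) in auto)
  then show ?case
    by simp
next
  case (Suc M)
  let ?I = "{real M<..real M + 1}" and ?T = "S \<inter> {real (Suc M)<..}"
  have split: "S \<inter> {real M<..} = ?I \<union> ?T" and disjoint: "?I \<inter> ?T = {}"
    using Suc.prems by auto
  have "set_integrable lebesgue ?I \<psi>" "set_integrable lebesgue ?T \<psi>"
    using Suc.prems S(1) by (auto intro!: set_integrable_subset[OF \<psi>])
  then have "(LINT u:S \<inter> {real M<..}|lebesgue. \<psi> u) = (LINT u:?I|lebesgue. \<psi> u) + (LINT u:?T|lebesgue. \<psi> u)"
    unfolding split by (intro set_integral_Un disjoint)
  with Suc show ?case
    by (simp add: subset_eq)
qed

lemma set_integral_exp_decay_bound:
  fixes \<psi> :: "real \<Rightarrow> real"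
  assumes \<psi>: "set_borel_measurable lebesgue S \<psi>" and S: "S \<in> sets lebesgue" "S \<subseteq> {a..}"
    and bound: "AE u in lebesgue. u \<in> S \<longrightarrow> \<bar>\<psi> u\<bar> \<le> C * exp (- u)" and "0 \<le> C"
  shows "set_integrable lebesgue S \<psi>" and "\<bar>LINT u:S|lebesgue. \<psi> u\<bar> \<le> C * exp (- a)"
proof -
  have exp: "integrable lebesgue (\<lambda>u. C * (indicator {a..} u * exp (- u)))"
    using set_integrable_exp_minus[of a] unfolding set_integrable_def by simp
  have le: "AE u in lebesgue. \<bar>indicator S u * \<psi> u\<bar> \<le> C * (indicator {a..} u * exp (- u))"
    using bound by eventually_elim (use S(2) \<open>0 \<le> C\<close> in \<open>auto simp: indicator_def\<close>)
  show integrable: "set_integrable lebesgue S \<psi>"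
    unfolding set_integrable_def
    using \<psi> le \<open>0 \<le> C\<close> unfolding set_borel_measurable_def
    by (intro Bochner_Integration.integrable_bound[OF exp]) (auto elim: eventually_mono)
  have "\<bar>LINT u:S|lebesgue. \<psi> u\<bar> \<le> (\<integral>u. \<bar>indicator S u * \<psi> u\<bar> \<partial>lebesgue)"
    unfolding set_lebesgue_integral_def using integral_abs_bound by simp
  also have "\<dots> \<le> (\<integral>u. C * (indicator {a..} u * exp (- u)) \<partial>lebesgue)"
    using integrable exp le unfolding set_integrable_def by (intro integral_mono_AE) simp_all
  also have "\<dots> = C * exp (- a)"
    using set_integral_exp_minus[of a] unfolding set_lebesgue_integral_def by simp
  finally show "\<bar>LINT u:S|lebesgue. \<psi> u\<bar> \<le> C * exp (- a)" .
qed

lemma tendsto_uniform_approximation: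
  fixes a :: "'a \<Rightarrow> real" and p :: "nat \<Rightarrow> 'a \<Rightarrow> real"
  assumes p: "\<And>M. (p M \<longlongrightarrow> q M) F"
    and a: "\<And>M. eventually (\<lambda>x. \<bar>a x - p M x\<bar> \<le> e M) F"
    and q: "\<And>M. \<bar>L - q M\<bar> \<le> e M" and e: "e \<longlonglongrightarrow> 0"
  shows "(a \<longlongrightarrow> L) F"
proof (rule tendstoI)
  fix \<epsilon> :: real assume "0 < \<epsilon>"
  then have "eventually (\<lambda>M. e M < \<epsilon> / 3) sequentially"
    using e by (intro order_tendstoD(2)) auto
  then obtain M where M: "e M < \<epsilon> / 3"
    by (metis eventually_sequentially order_refl)
  have "eventually (\<lambda>x. dist (p M x) (q M) < \<epsilon> / 3) F"
    using p \<open>0 < \<epsilon>\<close> by (intro tendstoD) simp_all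
  then show "eventually (\<lambda>x. dist (a x) L < \<epsilon>) F"
    using a[of M]
  proof eventually_elim
    case (elim x)
    then show ?case
      using q[of M] M unfolding dist_real_def by arith
  qed
qed

lemma tau_back_0 [simp]: "tau_back 0 \<omega> = \<omega>"
  unfolding tau_back_def by (simp add: filtermap_ident)

lemma omega_filter_tau_back:
  "omega_filter (tau_back N \<omega>) = filtermap (\<lambda>k. real (k - N) + snd \<omega>) (fst \<omega>)"
  unfolding omega_filter_def tau_back_def by (simp add: filtermap_filtermap)

lemma f_omega_ext_minus:
  assumes "0 \<le> u"
  shows "f_omega_ext f \<omega> (- u) = f_omega f (tau_back (nat \<lceil>u\<rceil>) \<omega>) (real (nat \<lceil>u\<rceil>) - u)"
  using assms by (cases "u = 0") (simp_all add: f_omega_ext_def Let_def)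

lemma f_omega_ext_unit_interval:
  "(LINT u:{real n<..real n + 1}|lebesgue. f_omega_ext f \<omega> (- u) * exp (- u)) =
    (LINT y:{0..<1}|lebesgue. f_omega f (tau_back (Suc n) \<omega>) y * exp (y - real (Suc n)))"
proof -
  have "nat \<lceil>real (Suc n) - y\<rceil> = Suc n" if "y \<in> {0..<1}" for y
    using that by (simp add: ceiling_eq_iff nat_eq_iff)
  then have "f_omega_ext f \<omega> (- (real (Suc n) - y)) = f_omega f (tau_back (Suc n) \<omega>) y"
    if "y \<in> {0..<1}" for y
    using that f_omega_ext_minus[of "real (Suc n) - y"] by simp
  then show ?thesis
    unfolding unit_interval_reflect by (intro set_lebesgue_integral_cong) auto
qed

locale bounded_at_Omega_star =
  fixes f :: "real \<Rightarrow> real" and C :: real and \<omega> :: "nat filter \<times> real"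
  assumes nonneg: "0 \<le> C"
    and measurable: "(\<lambda>x. indicator {0..} x * f x) \<in> borel_measurable lebesgue"
    and bound: "AE x in lebesgue. 0 \<le> x \<longrightarrow> \<bar>f x\<bar> \<le> C"
    and Omega_star: "\<omega> \<in> Omega_star"
begin

lemma ultrafilter: "is_ultrafilter (fst \<omega>)"
  and free: "fst \<omega> \<le> sequentially"
  and offset_nonneg: "0 \<le> snd \<omega>"
  using Omega_star unfolding Omega_star_def by auto

lemma Linf_Rplus: "f \<in> Linf_Rplus"
  using measurable bound unfolding Linf_Rplus_def set_borel_measurable_def by auto

lemma eventually_ge: "eventually (\<lambda>k. N \<le> k) (fst \<omega>)"
  using filter_leD[OF free eventually_ge_at_top] .

lemma omega_filter_nonbot: "omega_filter (tau_back N \<omega>) \<noteq> bot"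
  using ultrafilter unfolding omega_filter_tau_back is_ultrafilter_def by (simp add: filtermap_bot_iff)

lemma weak_star_lim_tau_back: "weak_star_lim f (tau_back N \<omega>) (f_omega f (tau_back N \<omega>))"
proof -
  have "is_ultrafilter (omega_filter (tau_back N \<omega>))"
    unfolding omega_filter_tau_back using ultrafilter by (rule is_ultrafilter_filtermap)
  moreover have "eventually (\<lambda>s. 0 \<le> s) (omega_filter (tau_back N \<omega>))"
    unfolding omega_filter_tau_back eventually_filtermap using offset_nonneg by simp
  ultimately have "\<exists>g. weak_star_lim f (tau_back N \<omega>) g"
    by (rule weak_star_lim_exists[OF Linf_Rplus])
  then show ?thesis
    unfolding f_omega_def by (rule someI_ex)
qed

lemma f_omega_tau_back_measurable:
  "(\<lambda>x. indicator {0..} x * f_omega f (tau_back N \<omega>) x) \<in> borel_measurable lebesgue"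
  using weak_star_lim_tau_back unfolding weak_star_lim_def by (auto elim: Linf_RplusE)

lemma f_omega_tau_back_bound: "AE x in lebesgue. 0 \<le> x \<longrightarrow> \<bar>f_omega f (tau_back N \<omega>) x\<bar> \<le> C"
  using offset_nonneg
  by (intro weak_star_lim_bound[OF measurable bound nonneg weak_star_lim_tau_back omega_filter_nonbot])
     (simp add: omega_filter_tau_back eventually_filtermap)

lemma omega_integrand_measurable:
  "set_borel_measurable lebesgue {0..} (\<lambda>u. f_omega_ext f \<omega> (- u) * exp (- u))"
proof -
  define K where "K N u = indicator {0..} u *
      (indicator {0..} (real N + -1 * u) * f_omega f (tau_back N \<omega>) (real N + -1 * u)) * exp (- u)" for N u
  have "K N \<in> borel_measurable lebesgue" for N
    unfolding K_def
    using Linf_Rplus_affine(1)[OF f_omega_tau_back_measurable f_omega_tau_back_bound, of "-1"] by simp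
  then have "(\<lambda>u. K (nat \<lceil>u\<rceil>) u) \<in> borel_measurable lebesgue"
    by (rule measurable_compose_countable) (intro measurable_completion; measurable)
  moreover have "K (nat \<lceil>u\<rceil>) u = indicator {0..} u *\<^sub>R (f_omega_ext f \<omega> (- u) * exp (- u))" for u
    by (cases "0 \<le> u") (simp_all add: K_def f_omega_ext_minus real_nat_ceiling_ge)
  ultimately show ?thesis
    unfolding set_borel_measurable_def by simp
qed

lemma omega_integrand_bound:
  "AE u in lebesgue. 0 \<le> u \<longrightarrow> \<bar>f_omega_ext f \<omega> (- u) * exp (- u)\<bar> \<le> C * exp (- u)"
proof -
  have "AE u in lebesgue. 0 \<le> real N - u \<longrightarrow> \<bar>f_omega f (tau_back N \<omega>) (real N - u)\<bar> \<le> C" for N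
    using Linf_Rplus_affine(2)[OF f_omega_tau_back_measurable f_omega_tau_back_bound, of "-1" "real N"]
    by simp
  then have "AE u in lebesgue. \<forall>N. 0 \<le> real N - u \<longrightarrow> \<bar>f_omega f (tau_back N \<omega>) (real N - u)\<bar> \<le> C"
    unfolding AE_all_countable by blast
  then show ?thesis
  proof eventually_elim
    case (elim u)
    show ?case
      using elim[rule_format, of "nat \<lceil>u\<rceil>"]
      by (auto simp: f_omega_ext_minus real_nat_ceiling_ge abs_mult intro: mult_right_mono)
  qed
qed

lemma chi_integrand_reflect:
  "exp (- x) * (LINT t:{0..x}|lebesgue. f t * exp t) = (LINT u:{0..x}|lebesgue. f (x - u) * exp (- u))"
proof -
  have "(LINT t:{0..x}|lebesgue. f t * exp t) = (LINT u:{u. x - u \<in> {0..x}}|lebesgue. f (x - u) * exp (x - u))"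
    by (rule lebesgue_set_integral_reflect)
  then have "exp (- x) * (LINT t:{0..x}|lebesgue. f t * exp t) =
      (LINT u:{u. x - u \<in> {0..x}}|lebesgue. exp (- x) * (f (x - u) * exp (x - u)))"
    by simp
  also have "{u. x - u \<in> {0..x}} = {0..x}"
    by auto
  also have "(LINT u:{0..x}|lebesgue. exp (- x) * (f (x - u) * exp (x - u))) =
      (LINT u:{0..x}|lebesgue. f (x - u) * exp (- u))"
    by (intro set_lebesgue_integral_cong) (auto simp: mult.left_commute simp flip: exp_add)
  finally show ?thesis .
qed

lemma chi_integrand_measurable: "set_borel_measurable lebesgue {0..x} (\<lambda>u. f (x - u) * exp (- u))"
proof -
  have reflected: "(\<lambda>u. indicator {0..} (x - u) * f (x - u)) \<in> borel_measurable lebesgue"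
    using Linf_Rplus_affine(1)[OF measurable bound, of "-1" x] by simp
  have "(\<lambda>u. indicator {0..x} u * (indicator {0..} (x - u) * f (x - u)) * exp (- u))
      \<in> borel_measurable lebesgue"
    by (rule borel_measurable_times[OF borel_measurable_times[OF borel_measurable_indicator reflected]]) simp_all
  moreover have "indicator {0..x} u * (indicator {0..} (x - u) * f (x - u)) * exp (- u) =
      indicator {0..x} u *\<^sub>R (f (x - u) * exp (- u))" for u
    by (simp add: indicator_def)
  ultimately show ?thesis
    unfolding set_borel_measurable_def by simp
qed

lemma chi_integrand_bound: "AE u in lebesgue. u \<in> {0..x} \<longrightarrow> \<bar>f (x - u) * exp (- u)\<bar> \<le> C * exp (- u)"
  using Linf_Rplus_affine(2)[OF measurable bound, of "-1" x, simplified]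
  by eventually_elim (auto simp: abs_mult intro: mult_right_mono)

lemma unit_interval_tendsto:
  "((\<lambda>x. LINT u:{real n<..real n + 1}|lebesgue. f (x - u) * exp (- u)) \<longlongrightarrow>
     (LINT u:{real n<..real n + 1}|lebesgue. f_omega_ext f \<omega> (- u) * exp (- u))) (omega_filter \<omega>)"
proof -
  define N where "N = Suc n"
  define g where "g = f_omega f (tau_back N \<omega>)"
  define h where "h y = indicator {0..<1} y * exp (y - real N)" for y
  note reflect = unit_interval_reflect[of n, folded N_def]
  have unit: "(LINT y:{0..<1}|lebesgue. v y * exp (y - real N)) = (LINT y:{0..}|lebesgue. v y * h y)" for v
    unfolding set_lebesgue_integral_def h_def
    by (intro Bochner_Integration.integral_cong) (auto simp: indicator_def)
  have "h \<in> L1_Rplus"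
    unfolding h_def by (rule unit_interval_exp_L1_Rplus)
  then have "((\<lambda>s. LINT y:{0..}|lebesgue. f (y + s) * h y) \<longlongrightarrow> (LINT y:{0..}|lebesgue. g y * h y))
      (omega_filter (tau_back N \<omega>))"
    using weak_star_lim_tau_back unfolding weak_star_lim_def g_def by blast
  then have lim: "((\<lambda>k. LINT y:{0..}|lebesgue. f (y + (real (k - N) + snd \<omega>)) * h y) \<longlongrightarrow>
      (LINT y:{0..}|lebesgue. g y * h y)) (fst \<omega>)"
    unfolding omega_filter_tau_back filterlim_filtermap .
  txt \<open>The free ultrafilter eventually lies above \<open>N\<close>, so the truncated \<open>k - N\<close> is exact.\<close>
  have shift: "eventually (\<lambda>k. (LINT y:{0..}|lebesgue. f (y + (real (k - N) + snd \<omega>)) * h y) =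
      (LINT u:{real n<..real n + 1}|lebesgue. f (real k + snd \<omega> - u) * exp (- u))) (fst \<omega>)"
    using eventually_ge[of N]
  proof eventually_elim
    case (elim k)
    have "(LINT u:{real n<..real n + 1}|lebesgue. f (real k + snd \<omega> - u) * exp (- u)) =
        (LINT y:{0..<1}|lebesgue. f (real k + snd \<omega> - (real N - y)) * exp (- (real N - y)))"
      by (rule reflect)
    also have "\<dots> = (LINT y:{0..<1}|lebesgue. f (y + (real (k - N) + snd \<omega>)) * exp (y - real N))"
      using elim by (intro set_lebesgue_integral_cong) (simp_all add: of_nat_diff algebra_simps)
    also have "\<dots> = (LINT y:{0..}|lebesgue. f (y + (real (k - N) + snd \<omega>)) * h y)"
      by (rule unit)
    finally show ?case
      by (rule sym)
  qed
  have limit: "(LINT u:{real n<..real n + 1}|lebesgue. f_omega_ext f \<omega> (- u) * exp (- u)) =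
      (LINT y:{0..}|lebesgue. g y * h y)"
    unfolding f_omega_ext_unit_interval unit[symmetric] g_def N_def ..
  show ?thesis
    unfolding omega_filter_def filterlim_filtermap limit o_def
    using Lim_transform_eventually[OF lim shift] by simp
qed

lemma chi_integrand_unit_interval_approx:
  "eventually (\<lambda>x. \<bar>exp (- x) * (LINT t:{0..x}|lebesgue. f t * exp t) -
      (\<Sum>n<M. LINT u:{real n<..real n + 1}|lebesgue. f (x - u) * exp (- u))\<bar> \<le> C * exp (- real M))
    (omega_filter \<omega>)"
proof -
  have "eventually (\<lambda>x. real M \<le> x) (omega_filter \<omega>)"
    unfolding omega_filter_def eventually_filtermap
    using eventually_ge[of M] by eventually_elim (use offset_nonneg in simp)
  then show ?thesis
  proof eventually_elim
    case (elim x)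
    have tail: "set_borel_measurable lebesgue ({0..x} \<inter> {real M<..}) (\<lambda>u. f (x - u) * exp (- u))"
      by (rule set_borel_measurable_subset[OF chi_integrand_measurable]) auto
    have "exp (- x) * (LINT t:{0..x}|lebesgue. f t * exp t) =
        (\<Sum>n<M. LINT u:{real n<..real n + 1}|lebesgue. f (x - u) * exp (- u)) +
        (LINT u:{0..x} \<inter> {real M<..}|lebesgue. f (x - u) * exp (- u))"
      unfolding chi_integrand_reflect using elim
      by (intro set_integral_split_unit_intervals set_integral_exp_decay_bound(1)[OF
            chi_integrand_measurable _ _ chi_integrand_bound nonneg]) auto
    moreover have "\<bar>LINT u:{0..x} \<inter> {real M<..}|lebesgue. f (x - u) * exp (- u)\<bar> \<le> C * exp (- real M)"
      using chi_integrand_bound[of x]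
      by (intro set_integral_exp_decay_bound(2)[OF tail]) (auto simp: nonneg elim: eventually_mono)
    ultimately show ?case
      by simp
  qed
qed

lemma omega_integral_unit_interval_approx:
  "\<bar>(LINT u:{0..}|lebesgue. f_omega_ext f \<omega> (- u) * exp (- u)) -
      (\<Sum>n<M. LINT u:{real n<..real n + 1}|lebesgue. f_omega_ext f \<omega> (- u) * exp (- u))\<bar>
    \<le> C * exp (- real M)"
proof -
  have tail: "set_borel_measurable lebesgue {real M<..} (\<lambda>u. f_omega_ext f \<omega> (- u) * exp (- u))"
    by (rule set_borel_measurable_subset[OF omega_integrand_measurable]) auto
  have "(LINT u:{0..}|lebesgue. f_omega_ext f \<omega> (- u) * exp (- u)) =
      (\<Sum>n<M. LINT u:{real n<..real n + 1}|lebesgue. f_omega_ext f \<omega> (- u) * exp (- u)) +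
      (LINT u:{real M<..}|lebesgue. f_omega_ext f \<omega> (- u) * exp (- u))"
    using set_integral_split_unit_intervals[OF set_integral_exp_decay_bound(1)[OF
          omega_integrand_measurable _ _ _ nonneg], of 0 M] omega_integrand_bound
    by (simp add: Int_absorb1 subset_eq)
  moreover have "\<bar>LINT u:{real M<..}|lebesgue. f_omega_ext f \<omega> (- u) * exp (- u)\<bar> \<le> C * exp (- real M)"
    using omega_integrand_bound
    by (intro set_integral_exp_decay_bound(2)[OF tail]) (auto simp: nonneg elim: eventually_mono)
  ultimately show ?thesis
    by simp
qed

lemma chi_tendsto:
  "((\<lambda>x. exp (- x) * (LINT t:{0..x}|lebesgue. f t * exp t)) \<longlongrightarrow>
     (LINT u:{0..}|lebesgue. f_omega_ext f \<omega> (- u) * exp (- u))) (omega_filter \<omega>)"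
proof (rule tendsto_uniform_approximation[OF _ chi_integrand_unit_interval_approx
      omega_integral_unit_interval_approx])
  show "((\<lambda>x. \<Sum>n<M. LINT u:{real n<..real n + 1}|lebesgue. f (x - u) * exp (- u)) \<longlongrightarrow>
      (\<Sum>n<M. LINT u:{real n<..real n + 1}|lebesgue. f_omega_ext f \<omega> (- u) * exp (- u))) (omega_filter \<omega>)"
    for M
    by (intro tendsto_sum unit_interval_tendsto)
  show "(\<lambda>M. C * exp (- real M)) \<longlonglongrightarrow> 0"
    by (intro tendsto_mult_right_zero filterlim_compose[OF exp_at_bot]
        filterlim_compose[OF filterlim_uminus_at_bot_at_top] filterlim_real_sequentially)
qed

end

theorem theorem3p3:
  assumes "f \<in> Linf_Rplus" and "\<omega> \<in> Omega_star"
  shows "chi \<omega> f = (LINT t:{0..}|lebesgue. f_omega_ext f \<omega> (- t) * exp (- t))"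
proof -
  obtain C where "0 \<le> C" "(\<lambda>x. indicator {0..} x * f x) \<in> borel_measurable lebesgue"
    "AE x in lebesgue. 0 \<le> x \<longrightarrow> \<bar>f x\<bar> \<le> C"
    using assms(1) by (rule Linf_RplusE)
  then interpret bounded_at_Omega_star f C \<omega>
    using assms(2) by unfold_locales
  show ?thesis
    unfolding chi_def using omega_filter_nonbot[of 0] chi_tendsto by (simp add: tendsto_Lim)
qed

end
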